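(* Fix a null parameter $\theta=(\rho,\gamma,\alpha_1,\beta_1,\dots,\alpha_n,\beta_n)$ satisfying (G1) and (G2), and define the alternative $\tilde\theta=(\rho^{(1)},\gamma^{(1)},\alpha_1,\beta_1,\dots,\alpha_n,\beta_n)$ by $(\rho^{(1)},\gamma^{(1)})=(\rho+\delta_1,\gamma)$ if $\theta$ is in Case (S), and $(\rho^{(1)},\gamma^{(1)})=(\rho+2\delta_2,\gamma-\delta_2)$ if $\theta$ is in Case (L), where $\delta_1,\delta_2$ may depend on $n$. Suppose $e^\rho\|\eta\|_1^2\delta_1^2\to0$ in Case (S) and $\|\mu\|_1\|\nu\|_1\delta_2^2\to0$ in Case (L) (with $\mu,\nu,\eta$ computed under $\theta$). Let $P_0^{(n)}$ and $P_1^{(n)}$ be the distributions of $A$ under $\theta$ and $\tilde\theta$ respectively. Then $\chi^2(P_0^{(n)},P_1^{(n)})\to0$ as $n\to\infty$.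
   Context: Asymptotic framework: $n\to\infty$ and all parameters may depend on $n$. $(x,y)$ is the inner product, $\|x\|_1$ the $\ell^1$ norm, $x_{\max}$ the largest entry. $\chi^2(P,Q)=\sum_x (Q(x)-P(x))^2/P(x)$ is the chi-square divergence. The $p_1$ model: a directed network on nodes $\{1,\dots,n\}$ has adjacency matrix $A\in\{0,1\}^{n\times n}$ with $A_{ii}=0$. The pairs $(A_{ij},A_{ji})$, $1\le i<j\le n$, are independent, and for parameters $\theta=(\rho,\gamma,\alpha_1,\beta_1,\dots,\alpha_n,\beta_n)$ with $\sum_i\alpha_i=\sum_i\beta_i=0$, for $a,b\in\{0,1\}$, $i\ne j$: $\mathbb P(A_{ij}=a,A_{ji}=b)=K_{ij}\exp(a(\gamma+\alpha_i+\beta_j)+b(\gamma+\alpha_j+\beta_i)+ab\rho)$, $K_{ij}=[1+e^{\gamma+\alpha_i+\beta_j}+e^{\gamma+\alpha_j+\beta_i}+e^{2\gamma+\alpha_i+\beta_j+\alpha_j+\beta_i+\rho}]^{-1}$. Let $\mu_i=e^{\gamma/2+\alpha_i}$, $\nu_i=e^{\gamma/2+\beta_i}$, $\eta_i=\mu_i\nu_i$; $\tilde\rho=\log(\|\eta\|_1^2/[(\mu,\eta)(\nu,\eta)])$. Conditions: (G1) $\mu_{\max}\to0$, $\nu_{\max}\to0$, $e^{\rho/2}\eta_{\max}\to0$. (G2) $e^{\rho/2}\|\eta\|_1\to\infty$ and $\|\eta\|_1\to\infty$. Case (S): $e^\rho/e^{\tilde\rho}\to0$; Case (L): $e^\rho\ge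 Ce^{\tilde\rho}$ for a constant $C>0$. *)

theory Defs
  imports "HOL-Analysis.Analysis"
begin

definition adj_set :: "nat \<Rightarrow> (nat \<Rightarrow> nat \<Rightarrow> bool) set" where
  "adj_set n = {A. \<forall>i j. A i j \<longrightarrow> i < n \<and> j < n \<and> i \<noteq> j}"

definition p1_K :: "real \<Rightarrow> real \<Rightarrow> (nat \<Rightarrow> real) \<Rightarrow> (nat \<Rightarrow> real) \<Rightarrow> nat \<Rightarrow> nat \<Rightarrow> real" where
  "p1_K \<rho> \<gamma> \<alpha> \<beta> i j = inverse (1 + exp (\<gamma> + \<alpha> i + \<beta> j) + exp (\<gamma> + \<alpha> j + \<beta> i)
      + exp (2 * \<gamma> + \<alpha> i + \<beta> j + \<alpha> j + \<beta> i + \<rho>))"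

definition p1_dyad :: "real \<Rightarrow> real \<Rightarrow> (nat \<Rightarrow> real) \<Rightarrow> (nat \<Rightarrow> real) \<Rightarrow> nat \<Rightarrow> nat \<Rightarrow> bool \<Rightarrow> bool \<Rightarrow> real" where
  "p1_dyad \<rho> \<gamma> \<alpha> \<beta> i j a b = p1_K \<rho> \<gamma> \<alpha> \<beta> i j *
     exp (of_bool a * (\<gamma> + \<alpha> i + \<beta> j) + of_bool b * (\<gamma> + \<alpha> j + \<beta> i) + of_bool (a \<and> b) * \<rho>)"

definition p1_pmf :: "nat \<Rightarrow> real \<Rightarrow> real \<Rightarrow> (nat \<Rightarrow> real) \<Rightarrow> (nat \<Rightarrow> real) \<Rightarrow> (nat \<Rightarrow> nat \<Rightarrow> bool) \<Rightarrow> real" where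
  "p1_pmf n \<rho> \<gamma> \<alpha> \<beta> A =
     (if A \<in> adj_set n then (\<Prod>(i,j)\<in>{(i,j). i < j \<and> j < n}. p1_dyad \<rho> \<gamma> \<alpha> \<beta> i j (A i j) (A j i)) else 0)"

definition chi_square :: "'a set \<Rightarrow> ('a \<Rightarrow> real) \<Rightarrow> ('a \<Rightarrow> real) \<Rightarrow> real" where
  "chi_square S P Q = (\<Sum>x\<in>S. (Q x - P x)^2 / P x)"

definition p1_mu :: "real \<Rightarrow> (nat \<Rightarrow> real) \<Rightarrow> nat \<Rightarrow> real" where
  "p1_mu \<gamma> \<alpha> i = exp (\<gamma> / 2 + \<alpha> i)"

definition p1_eta :: "real \<Rightarrow> (nat \<Rightarrow> real) \<Rightarrow> (nat \<Rightarrow> real) \<Rightarrow> nat \<Rightarrow> real" where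
  "p1_eta \<gamma> \<alpha> \<beta> i = p1_mu \<gamma> \<alpha> i * p1_mu \<gamma> \<beta> i"

definition l1 :: "nat \<Rightarrow> (nat \<Rightarrow> real) \<Rightarrow> real" where
  "l1 n x = (\<Sum>i<n. \<bar>x i\<bar>)"

definition ip :: "nat \<Rightarrow> (nat \<Rightarrow> real) \<Rightarrow> (nat \<Rightarrow> real) \<Rightarrow> real" where
  "ip n x y = (\<Sum>i<n. x i * y i)"

definition vmax :: "nat \<Rightarrow> (nat \<Rightarrow> real) \<Rightarrow> real" where
  "vmax n x = Max (x ` {..<n})"

definition rho_tilde :: "nat \<Rightarrow> real \<Rightarrow> (nat \<Rightarrow> real) \<Rightarrow> (nat \<Rightarrow> real) \<Rightarrow> real" where
  "rho_tilde n \<gamma> \<alpha> \<beta> = ln ((l1 n (p1_eta \<gamma> \<alpha> \<beta>))^2 /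
      (ip n (p1_mu \<gamma> \<alpha>) (p1_eta \<gamma> \<alpha> \<beta>) * ip n (p1_mu \<gamma> \<beta>) (p1_eta \<gamma> \<alpha> \<beta>)))"

end

theory Submission
  imports Defs
begin

(* Because the dyads are independent, 1 + chi^2(P0, P1) is the product over the dyads of the
   same quantity for a single dyad, hence at most exp of the sum of the dyad divergences.
   Each alternative merely reweights some states of a dyad: shifting rho by d multiplies the
   weight of the mutual state (1,1) by e^d, while (rho + 2d, gamma - d) multiplies the weights
   of the asymmetric states (1,0) and (0,1) by e^-d. Reweighting states of total probability
   pi by e^d has divergence pi (1 - pi) (e^d - 1)^2 / (1 + pi (e^d - 1))^2 <= pi (e^|d| - 1)^2,
   and pi is at most e^rho eta_i eta_j, resp. mu_i nu_j + mu_j nu_i. Summing over the dyads,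
   chi^2 <= exp (X (e^|d| - 1)^2) - 1 with X = e^rho ||eta||_1^2, resp. ||mu||_1 ||nu||_1.
   By (G2) eventually X >= 1, so X d^2 -> 0 forces d -> 0 and the bound tends to 0. *)

section \<open>Chi-square divergence of independent dyads\<close>

lemma chi_square_nonneg:
  assumes "\<And>x. x \<in> S \<Longrightarrow> 0 \<le> P x"
  shows "0 \<le> chi_square S P Q"
  unfolding chi_square_def using assms by (intro sum_nonneg) simp

lemma chi_square_eq_sum_ratio:
  assumes pos: "\<And>x. x \<in> S \<Longrightarrow> 0 < P x"
    and sum_P: "sum P S = 1" and sum_Q: "sum Q S = 1"
  shows "chi_square S P Q = (\<Sum>x\<in>S. (Q x)\<^sup>2 / P x) - 1"
proof -
  have "chi_square S P Q = (\<Sum>x\<in>S. (Q x)\<^sup>2 / P x - 2 * Q x + P x)"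
    unfolding chi_square_def
    by (intro sum.cong refl) (use pos in \<open>force simp: field_simps power2_eq_square\<close>)
  also have "\<dots> = (\<Sum>x\<in>S. (Q x)\<^sup>2 / P x) - 2 * sum Q S + sum P S"
    by (simp add: sum.distrib sum_subtractf sum_distrib_left)
  finally show ?thesis using sum_P sum_Q by simp
qed

abbreviation dyads :: "nat \<Rightarrow> (nat \<times> nat) set" where
  "dyads n \<equiv> {(i, j). i < j \<and> j < n}"

lemma finite_dyads: "finite (dyads n)"
  by (rule finite_subset[of _ "{..<n} \<times> {..<n}"]) auto

lemma sum_dyads_sym_le:
  fixes g :: "nat \<Rightarrow> nat \<Rightarrow> real"
  assumes "\<And>i j. 0 \<le> g i j"
  shows "(\<Sum>(i, j)\<in>dyads n. g i j + g j i) \<le> (\<Sum>i<n. \<Sum>j<n. g i j)"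
proof -
  define dyads' where "dyads' = {(i, j). j < i \<and> i < n}"
  have "finite dyads'"
    unfolding dyads'_def by (rule finite_subset[of _ "{..<n} \<times> {..<n}"]) auto
  have "(\<Sum>(i, j)\<in>dyads n. g j i) = (\<Sum>(i, j)\<in>dyads'. g i j)"
    by (rule sum.reindex_bij_witness[of _ prod.swap prod.swap]) (auto simp: dyads'_def)
  then have "(\<Sum>(i, j)\<in>dyads n. g i j + g j i) = (\<Sum>(i, j)\<in>dyads n \<union> dyads'. g i j)"
    using finite_dyads \<open>finite dyads'\<close>
    by (subst sum.union_disjoint) (auto simp: sum.distrib case_prod_beta' dyads'_def)
  also have "\<dots> \<le> (\<Sum>(i, j)\<in>{..<n} \<times> {..<n}. g i j)"
    by (rule sum_mono2) (auto simp: assms dyads'_def)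
  finally show ?thesis
    by (simp add: sum.cartesian_product)
qed

lemma sum_adj_set_prod_dyads:
  fixes f :: "nat \<Rightarrow> nat \<Rightarrow> bool \<Rightarrow> bool \<Rightarrow> real"
  shows "(\<Sum>A\<in>adj_set n. \<Prod>(i, j)\<in>dyads n. f i j (A i j) (A j i))
       = (\<Prod>(i, j)\<in>dyads n. \<Sum>(a, b)\<in>UNIV. f i j a b)"
proof -
  define to_dyads where "to_dyads A = (\<lambda>(i, j) \<in> dyads n. (A i j, A j i))"
    for A :: "nat \<Rightarrow> nat \<Rightarrow> bool"
  define to_adj where "to_adj g = (\<lambda>i j. if (i, j) \<in> dyads n then fst (g (i, j))
      else if (j, i) \<in> dyads n then snd (g (j, i)) else False)"
    for g :: "nat \<times> nat \<Rightarrow> bool \<times> bool"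
  have "(\<Prod>(i, j)\<in>dyads n. \<Sum>(a, b)\<in>UNIV. f i j a b)
      = (\<Sum>g\<in>dyads n \<rightarrow>\<^sub>E UNIV. \<Prod>d\<in>dyads n. case_prod (case_prod f d) (g d))"
    by (subst prod_sum_PiE[OF finite_dyads, symmetric]) (auto simp: case_prod_beta')
  also have "\<dots> = (\<Sum>A\<in>adj_set n. \<Prod>(i, j)\<in>dyads n. f i j (A i j) (A j i))"
  proof (rule sum.reindex_bij_witness[of _ to_dyads to_adj])
    fix A assume "A \<in> adj_set n"
    then show "to_adj (to_dyads A) = A"
      unfolding adj_set_def to_adj_def to_dyads_def
      by (intro ext) (auto, metis linorder_neqE_nat)
  next
    fix g assume "g \<in> dyads n \<rightarrow>\<^sub>E (UNIV :: (bool \<times> bool) set)"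
    then show "to_dyads (to_adj g) = g"
      unfolding to_adj_def to_dyads_def
      by (intro ext) (clarsimp simp: PiE_def extensional_def; metis prod.collapse)
  next
    fix g :: "nat \<times> nat \<Rightarrow> bool \<times> bool"
    show "to_adj g \<in> adj_set n"
      unfolding adj_set_def to_adj_def by auto
    show "(\<Prod>(i, j)\<in>dyads n. f i j (to_adj g i j) (to_adj g j i))
        = (\<Prod>d\<in>dyads n. case_prod (case_prod f d) (g d))"
      by (rule prod.cong) (auto simp: to_adj_def split: prod.split)
  qed (auto simp: to_dyads_def)
  finally show ?thesis ..
qed

lemma chi_square_dyad_product:
  fixes p q :: "nat \<Rightarrow> nat \<Rightarrow> bool \<Rightarrow> bool \<Rightarrow> real"
  assumes P: "\<And>A. A \<in> adj_set n \<Longrightarrow> P A = (\<Prod>(i, j)\<in>dyads n. p i j (A i j) (A j i))"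
    and Q: "\<And>A. A \<in> adj_set n \<Longrightarrow> Q A = (\<Prod>(i, j)\<in>dyads n. q i j (A i j) (A j i))"
    and p_pos: "\<And>i j a b. 0 < p i j a b"
    and sum_p: "\<And>i j. (\<Sum>(a, b)\<in>UNIV. p i j a b) = 1"
    and sum_q: "\<And>i j. (\<Sum>(a, b)\<in>UNIV. q i j a b) = 1"
  shows "chi_square (adj_set n) P Q
       = (\<Prod>(i, j)\<in>dyads n. \<Sum>(a, b)\<in>UNIV. (q i j a b)\<^sup>2 / p i j a b) - 1"
proof -
  have "sum P (adj_set n) = 1"
    using sum_adj_set_prod_dyads[of p n] by (simp add: P sum_p)
  moreover have "sum Q (adj_set n) = 1"
    using sum_adj_set_prod_dyads[of q n] by (simp add: Q sum_q)
  moreover have "(\<Sum>A\<in>adj_set n. (Q A)\<^sup>2 / P A)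
      = (\<Prod>(i, j)\<in>dyads n. \<Sum>(a, b)\<in>UNIV. (q i j a b)\<^sup>2 / p i j a b)"
    using sum_adj_set_prod_dyads[of "\<lambda>i j a b. (q i j a b)\<^sup>2 / p i j a b" n]
    by (simp add: P Q prod_power_distrib prod_dividef case_prod_beta')
  moreover have "0 < P A" if "A \<in> adj_set n" for A
    unfolding P[OF that] by (rule prod_pos) (auto simp: p_pos)
  ultimately show ?thesis
    by (simp add: chi_square_eq_sum_ratio)
qed

section \<open>Reweighting a finite distribution\<close>

lemma sum_sq_ratio_reweight:
  fixes w w' :: "'a \<Rightarrow> real"
  assumes "finite S" and w_pos: "\<And>x. x \<in> S \<Longrightarrow> 0 < w x" and "B \<subseteq> S"
    and w': "\<And>x. x \<in> S \<Longrightarrow> w' x = (if x \<in> B then t * w x else w x)"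
  shows "(\<Sum>x\<in>S. (w' x / sum w' S)\<^sup>2 / (w x / sum w S))
       = sum w S * (sum w S + sum w B * (t\<^sup>2 - 1)) / (sum w S + sum w B * (t - 1))\<^sup>2"
proof -
  have split: "sum f S = sum f B + sum f (S - B)" for f :: "'a \<Rightarrow> real"
    using \<open>finite S\<close> \<open>B \<subseteq> S\<close> by (metis sum.subset_diff add.commute)
  have w'_B: "w' x = t * w x" if "x \<in> B" for x
    using that \<open>B \<subseteq> S\<close> w' by auto
  have w'_rest: "w' x = w x" if "x \<in> S - B" for x
    using that w' by auto
  have "sum w' S = sum w S + sum w B * (t - 1)"
    using split[of w'] split[of w]
    by (simp add: w'_B w'_rest sum_distrib_left[symmetric] algebra_simps)
  moreover have "(\<Sum>x\<in>S. (w' x)\<^sup>2 / w x) = sum w S + sum w B * (t\<^sup>2 - 1)"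
  proof -
    have "(\<Sum>x\<in>B. (w' x)\<^sup>2 / w x) = t\<^sup>2 * sum w B"
      using \<open>B \<subseteq> S\<close> w_pos
      by (auto simp: w'_B sum_distrib_left power2_eq_square intro!: sum.cong)
    moreover have "(\<Sum>x\<in>S - B. (w' x)\<^sup>2 / w x) = sum w (S - B)"
      using w_pos by (auto simp: w'_rest power2_eq_square intro!: sum.cong)
    ultimately show ?thesis
      using split[of "\<lambda>x. (w' x)\<^sup>2 / w x"] split[of w] by (simp add: algebra_simps)
  qed
  moreover have "(\<Sum>x\<in>S. (w' x / sum w' S)\<^sup>2 / (w x / sum w S))
      = sum w S / (sum w' S)\<^sup>2 * (\<Sum>x\<in>S. (w' x)\<^sup>2 / w x)"
    unfolding sum_distrib_left by (intro sum.cong refl) (simp add: power_divide)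
  ultimately show ?thesis by simp
qed

lemma sq_exp_minus_one_div_min:
  fixes d :: real
  shows "((exp d - 1) / min 1 (exp d))\<^sup>2 = (exp \<bar>d\<bar> - 1)\<^sup>2"
proof (cases "0 \<le> d")
  case False
  then have "exp d < 1" by simp
  with False have "min 1 (exp d) = exp d" and "exp \<bar>d\<bar> = inverse (exp d)"
    by (simp_all add: exp_minus)
  then have "(exp d - 1) / min 1 (exp d) = - (exp \<bar>d\<bar> - 1)"
    by (simp add: field_simps)
  then show ?thesis by (simp add: power2_commute)
qed simp

lemma reweight_ratio_le:
  fixes Z m d :: real
  assumes Z: "1 \<le> Z" and m: "0 \<le> m" "m \<le> Z"
  shows "Z * (Z + m * ((exp d)\<^sup>2 - 1)) / (Z + m * (exp d - 1))\<^sup>2 - 1 \<le> m * (exp \<bar>d\<bar> - 1)\<^sup>2"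
proof -
  define t where "t = exp d"
  define Z' where "Z' = Z + m * (t - 1)"
  have t: "0 < t" "0 < min 1 t" by (simp_all add: t_def)
  have Z'_ge: "Z * min 1 t \<le> Z'"
  proof (cases "1 \<le> t")
    case True
    then show ?thesis using m by (simp add: Z'_def)
  next
    case False
    then have "0 \<le> (Z - m) * (1 - t)" using m by simp
    then show ?thesis using False by (simp add: Z'_def min_def algebra_simps)
  qed
  have Z'_pos: "0 < Z'" using Z'_ge Z t by (smt (verit) mult_pos_pos)
  have "Z * (Z + m * (t\<^sup>2 - 1)) = Z'\<^sup>2 + m * (Z - m) * (t - 1)\<^sup>2"
    unfolding Z'_def by (simp add: power2_eq_square algebra_simps)
  then have "Z * (Z + m * (t\<^sup>2 - 1)) / Z'\<^sup>2 - 1 = m * (Z - m) * (t - 1)\<^sup>2 / Z'\<^sup>2"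
    using Z'_pos by (simp add: field_simps)
  also have "\<dots> \<le> m * Z * (t - 1)\<^sup>2 / (Z * min 1 t)\<^sup>2"
    using m Z t Z'_ge
    by (intro frac_le mult_right_mono mult_left_mono power_mono) (simp_all add: zero_less_mult_iff)
  also have "\<dots> = m / Z * ((t - 1) / min 1 t)\<^sup>2"
    using Z t by (simp add: field_simps power2_eq_square)
  also have "\<dots> \<le> m * ((t - 1) / min 1 t)\<^sup>2"
    using Z m by (intro mult_right_mono) (simp_all add: divide_le_eq mult_le_cancel_left1)
  finally show ?thesis
    by (simp add: t_def Z'_def sq_exp_minus_one_div_min)
qed

lemma sum_sq_ratio_reweight_le:
  fixes w w' :: "'a \<Rightarrow> real"
  assumes "finite S" and w_pos: "\<And>x. x \<in> S \<Longrightarrow> 0 < w x" and "B \<subseteq> S"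
    and w': "\<And>x. x \<in> S \<Longrightarrow> w' x = (if x \<in> B then exp d * w x else w x)"
    and "1 \<le> sum w S"
  shows "(\<Sum>x\<in>S. (w' x / sum w' S)\<^sup>2 / (w x / sum w S)) - 1 \<le> sum w B * (exp \<bar>d\<bar> - 1)\<^sup>2"
proof -
  have w_nonneg: "0 \<le> w x" if "x \<in> S" for x
    using w_pos[OF that] by simp
  have "0 \<le> sum w B"
    using \<open>B \<subseteq> S\<close> w_nonneg by (intro sum_nonneg) auto
  moreover have "sum w B \<le> sum w S"
    using assms(1,3) w_nonneg by (intro sum_mono2) auto
  ultimately have "sum w S * (sum w S + sum w B * ((exp d)\<^sup>2 - 1)) / (sum w S + sum w B * (exp d - 1))\<^sup>2 - 1
      \<le> sum w B * (exp \<bar>d\<bar> - 1)\<^sup>2"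
    by (intro reweight_ratio_le \<open>1 \<le> sum w S\<close>)
  moreover have "(\<Sum>x\<in>S. (w' x / sum w' S)\<^sup>2 / (w x / sum w S))
      = sum w S * (sum w S + sum w B * ((exp d)\<^sup>2 - 1)) / (sum w S + sum w B * (exp d - 1))\<^sup>2"
    by (rule sum_sq_ratio_reweight) (use assms in auto)
  ultimately show ?thesis by linarith
qed

section \<open>The dyad law of the p1 model\<close>

definition dyad_weight :: "real \<Rightarrow> real \<Rightarrow> real \<Rightarrow> bool \<times> bool \<Rightarrow> real" where
  "dyad_weight x y r = (\<lambda>(a, b). exp (of_bool a * x + of_bool b * y + of_bool (a \<and> b) * r))"

lemma dyad_weight_pos: "0 < dyad_weight x y r ab"
  by (simp add: dyad_weight_def split: prod.split)

lemma sum_dyad_weight: "sum (dyad_weight x y r) UNIV = 1 + exp x + exp y + exp (x + y + r)"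
proof -
  have UNIV_eq: "(UNIV :: (bool \<times> bool) set) = {(True, True), (True, False), (False, True), (False, False)}"
    by auto
  show ?thesis by (subst UNIV_eq) (simp add: dyad_weight_def)
qed

lemma dyad_weight_shift_r:
  "dyad_weight x y (r + d) ab
     = (if ab \<in> {(True, True)} then exp d * dyad_weight x y r ab else dyad_weight x y r ab)"
  by (cases ab) (auto simp: dyad_weight_def mult_exp_exp algebra_simps)

lemma dyad_weight_shift_xy:
  "dyad_weight (x - d) (y - d) (r + 2 * d) ab
     = (if ab \<in> {(True, False), (False, True)} then exp (- d) * dyad_weight x y r ab
        else dyad_weight x y r ab)"
  by (cases ab) (auto simp: dyad_weight_def mult_exp_exp algebra_simps)

lemma p1_dyad_eq_dyad_weight:
  "p1_dyad \<rho> \<gamma> \<alpha> \<beta> i j a b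
     = dyad_weight (\<gamma> + \<alpha> i + \<beta> j) (\<gamma> + \<alpha> j + \<beta> i) \<rho> (a, b)
       / sum (dyad_weight (\<gamma> + \<alpha> i + \<beta> j) (\<gamma> + \<alpha> j + \<beta> i) \<rho>) UNIV"
proof -
  have "2 * \<gamma> + \<alpha> i + \<beta> j + \<alpha> j + \<beta> i + \<rho> = (\<gamma> + \<alpha> i + \<beta> j) + (\<gamma> + \<alpha> j + \<beta> i) + \<rho>"
    by simp
  then show ?thesis
    unfolding p1_dyad_def p1_K_def sum_dyad_weight
    by (simp add: dyad_weight_def divide_inverse mult.commute)
qed

lemma p1_dyad_sum_sq_ratio_shift_rho_le:
  "(\<Sum>(a, b)\<in>UNIV. (p1_dyad (\<rho> + \<delta>) \<gamma> \<alpha> \<beta> i j a b)\<^sup>2 / p1_dyad \<rho> \<gamma> \<alpha> \<beta> i j a b) - 1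
     \<le> exp \<rho> * (p1_eta \<gamma> \<alpha> \<beta> i * p1_eta \<gamma> \<alpha> \<beta> j) * (exp \<bar>\<delta>\<bar> - 1)\<^sup>2"
proof -
  define w where "w = dyad_weight (\<gamma> + \<alpha> i + \<beta> j) (\<gamma> + \<alpha> j + \<beta> i) \<rho>"
  define w' where "w' = dyad_weight (\<gamma> + \<alpha> i + \<beta> j) (\<gamma> + \<alpha> j + \<beta> i) (\<rho> + \<delta>)"
  have "1 \<le> sum w UNIV"
    unfolding w_def sum_dyad_weight by (smt (verit) exp_gt_zero)
  then have "(\<Sum>ab\<in>UNIV. (w' ab / sum w' UNIV)\<^sup>2 / (w ab / sum w UNIV)) - 1
      \<le> sum w {(True, True)} * (exp \<bar>\<delta>\<bar> - 1)\<^sup>2"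
    by (intro sum_sq_ratio_reweight_le) (simp_all add: w_def w'_def dyad_weight_pos dyad_weight_shift_r)
  moreover have "sum w {(True, True)} = exp \<rho> * (p1_eta \<gamma> \<alpha> \<beta> i * p1_eta \<gamma> \<alpha> \<beta> j)"
    by (simp add: w_def dyad_weight_def p1_eta_def p1_mu_def mult_exp_exp algebra_simps)
  ultimately show ?thesis
    by (simp add: p1_dyad_eq_dyad_weight w_def w'_def)
qed

lemma p1_dyad_sum_sq_ratio_shift_gamma_le:
  "(\<Sum>(a, b)\<in>UNIV. (p1_dyad (\<rho> + 2 * \<delta>) (\<gamma> - \<delta>) \<alpha> \<beta> i j a b)\<^sup>2 / p1_dyad \<rho> \<gamma> \<alpha> \<beta> i j a b) - 1
     \<le> (p1_mu \<gamma> \<alpha> i * p1_mu \<gamma> \<beta> j + p1_mu \<gamma> \<alpha> j * p1_mu \<gamma> \<beta> i) * (exp \<bar>\<delta>\<bar> - 1)\<^sup>2"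
proof -
  define x y where "x = \<gamma> + \<alpha> i + \<beta> j" and "y = \<gamma> + \<alpha> j + \<beta> i"
  define w where "w = dyad_weight x y \<rho>"
  define w' where "w' = dyad_weight (x - \<delta>) (y - \<delta>) (\<rho> + 2 * \<delta>)"
  have "1 \<le> sum w UNIV"
    unfolding w_def sum_dyad_weight by (smt (verit) exp_gt_zero)
  then have "(\<Sum>ab\<in>UNIV. (w' ab / sum w' UNIV)\<^sup>2 / (w ab / sum w UNIV)) - 1
      \<le> sum w {(True, False), (False, True)} * (exp \<bar>- \<delta>\<bar> - 1)\<^sup>2"
    by (intro sum_sq_ratio_reweight_le) (simp_all add: w_def w'_def dyad_weight_pos dyad_weight_shift_xy)
  moreover have "sum w {(True, False), (False, True)}
      = p1_mu \<gamma> \<alpha> i * p1_mu \<gamma> \<beta> j + p1_mu \<gamma> \<alpha> j * p1_mu \<gamma> \<beta> i"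
    by (simp add: w_def x_def y_def dyad_weight_def p1_mu_def mult_exp_exp algebra_simps)
  moreover have "p1_dyad (\<rho> + 2 * \<delta>) (\<gamma> - \<delta>) \<alpha> \<beta> i j a b = w' (a, b) / sum w' UNIV" for a b
    unfolding p1_dyad_eq_dyad_weight w'_def x_def y_def by (simp add: algebra_simps)
  ultimately show ?thesis
    by (simp add: p1_dyad_eq_dyad_weight w_def x_def y_def)
qed

lemma p1_dyad_pos: "0 < p1_dyad \<rho> \<gamma> \<alpha> \<beta> i j a b"
  by (simp add: p1_dyad_eq_dyad_weight dyad_weight_pos sum_pos)

lemma sum_p1_dyad: "(\<Sum>(a, b)\<in>UNIV. p1_dyad \<rho> \<gamma> \<alpha> \<beta> i j a b) = 1"
proof -
  have "0 < sum (dyad_weight (\<gamma> + \<alpha> i + \<beta> j) (\<gamma> + \<alpha> j + \<beta> i) \<rho>) UNIV"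
    by (simp add: dyad_weight_pos sum_pos)
  then show ?thesis
    by (simp add: p1_dyad_eq_dyad_weight flip: sum_divide_distrib)
qed

lemma p1_pmf_nonneg: "0 \<le> p1_pmf n \<rho> \<gamma> \<alpha> \<beta> A"
  unfolding p1_pmf_def by (auto intro!: prod_nonneg simp: p1_dyad_pos less_imp_le)

lemma chi_square_p1_le:
  fixes \<rho> \<rho>' \<gamma> \<gamma>' :: real and \<alpha> \<beta> :: "nat \<Rightarrow> real" and c :: "nat \<Rightarrow> nat \<Rightarrow> real"
  defines "S \<equiv> \<lambda>i j. \<Sum>(a, b)\<in>UNIV. (p1_dyad \<rho>' \<gamma>' \<alpha> \<beta> i j a b)\<^sup>2 / p1_dyad \<rho> \<gamma> \<alpha> \<beta> i j a b"
  assumes "\<And>i j. S i j - 1 \<le> c i j"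
  shows "chi_square (adj_set n) (p1_pmf n \<rho> \<gamma> \<alpha> \<beta>) (p1_pmf n \<rho>' \<gamma>' \<alpha> \<beta>)
      \<le> exp (\<Sum>(i, j)\<in>dyads n. c i j) - 1"
proof -
  have S_ge_1: "1 \<le> S i j" for i j
  proof -
    let ?p = "\<lambda>(a, b). p1_dyad \<rho> \<gamma> \<alpha> \<beta> i j a b" and ?q = "\<lambda>(a, b). p1_dyad \<rho>' \<gamma>' \<alpha> \<beta> i j a b"
    have "chi_square UNIV ?p ?q = S i j - 1"
      unfolding S_def
      by (subst chi_square_eq_sum_ratio) (auto simp: p1_dyad_pos sum_p1_dyad intro!: sum.cong)
    moreover have "0 \<le> chi_square UNIV ?p ?q"
      by (rule chi_square_nonneg) (simp add: p1_dyad_pos less_imp_le split_def)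
    ultimately show ?thesis by simp
  qed
  have "chi_square (adj_set n) (p1_pmf n \<rho> \<gamma> \<alpha> \<beta>) (p1_pmf n \<rho>' \<gamma>' \<alpha> \<beta>)
      = (\<Prod>(i, j)\<in>dyads n. 1 + (S i j - 1)) - 1"
    unfolding S_def
    by (simp, rule chi_square_dyad_product) (simp_all add: p1_pmf_def p1_dyad_pos sum_p1_dyad)
  also have "\<dots> \<le> exp (\<Sum>(i, j)\<in>dyads n. S i j - 1) - 1"
    using prod_le_exp_sum[of "dyads n" "\<lambda>(i, j). S i j - 1"] S_ge_1 by (simp add: split_def)
  also have "\<dots> \<le> exp (\<Sum>(i, j)\<in>dyads n. c i j) - 1"
    using assms by (simp add: sum_mono split_def)
  finally show ?thesis .
qed

lemma l1_eq_sum: "(\<And>i. 0 < x i) \<Longrightarrow> l1 n x = (\<Sum>i<n. x i)"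
  unfolding l1_def by (intro sum.cong) (simp_all add: less_imp_le)

lemma p1_mu_pos: "0 < p1_mu \<gamma> \<alpha> i"
  by (simp add: p1_mu_def)

lemma p1_eta_pos: "0 < p1_eta \<gamma> \<alpha> \<beta> i"
  by (simp add: p1_eta_def p1_mu_pos)

lemma l1_p1_eta_le: "l1 n (p1_eta \<gamma> \<alpha> \<beta>) \<le> l1 n (p1_mu \<gamma> \<alpha>) * l1 n (p1_mu \<gamma> \<beta>)"
proof -
  have "(\<Sum>i<n. p1_mu \<gamma> \<alpha> i * p1_mu \<gamma> \<beta> i) \<le> (\<Sum>i<n. \<Sum>j<n. p1_mu \<gamma> \<alpha> i * p1_mu \<gamma> \<beta> j)"
    by (intro sum_mono member_le_sum) (simp_all add: p1_mu_pos less_imp_le)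
  then show ?thesis
    by (simp add: l1_eq_sum p1_mu_pos p1_eta_pos p1_eta_def sum_product)
qed

lemma chi_square_p1_shift_rho_le:
  "chi_square (adj_set n) (p1_pmf n \<rho> \<gamma> \<alpha> \<beta>) (p1_pmf n (\<rho> + \<delta>) \<gamma> \<alpha> \<beta>)
     \<le> exp (exp \<rho> * (l1 n (p1_eta \<gamma> \<alpha> \<beta>))\<^sup>2 * (exp \<bar>\<delta>\<bar> - 1)\<^sup>2) - 1"
proof -
  define \<eta> where "\<eta> = p1_eta \<gamma> \<alpha> \<beta>"
  define K where "K = exp \<rho> * (exp \<bar>\<delta>\<bar> - 1)\<^sup>2"
  have "chi_square (adj_set n) (p1_pmf n \<rho> \<gamma> \<alpha> \<beta>) (p1_pmf n (\<rho> + \<delta>) \<gamma> \<alpha> \<beta>)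
      \<le> exp (\<Sum>(i, j)\<in>dyads n. K * (\<eta> i * \<eta> j)) - 1"
    by (rule chi_square_p1_le)
      (use p1_dyad_sum_sq_ratio_shift_rho_le in \<open>simp add: K_def \<eta>_def mult_ac\<close>)
  also have "\<dots> \<le> exp (K * (l1 n \<eta>)\<^sup>2) - 1"
  proof -
    have "(\<Sum>(i, j)\<in>dyads n. \<eta> i * \<eta> j) \<le> (\<Sum>(i, j)\<in>{..<n} \<times> {..<n}. \<eta> i * \<eta> j)"
      by (rule sum_mono2) (auto simp: \<eta>_def p1_eta_pos less_imp_le)
    also have "\<dots> = (l1 n \<eta>)\<^sup>2"
      by (simp add: \<eta>_def l1_eq_sum p1_eta_pos power2_eq_square sum_product sum.cartesian_product)
    finally have "K * (\<Sum>(i, j)\<in>dyads n. \<eta> i * \<eta> j) \<le> K * (l1 n \<eta>)\<^sup>2"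
      by (rule mult_left_mono) (simp add: K_def)
    then show ?thesis
      by (simp add: sum_distrib_left case_prod_beta')
  qed
  finally show ?thesis
    by (simp add: K_def \<eta>_def mult_ac)
qed

lemma chi_square_p1_shift_gamma_le:
  "chi_square (adj_set n) (p1_pmf n \<rho> \<gamma> \<alpha> \<beta>) (p1_pmf n (\<rho> + 2 * \<delta>) (\<gamma> - \<delta>) \<alpha> \<beta>)
     \<le> exp (l1 n (p1_mu \<gamma> \<alpha>) * l1 n (p1_mu \<gamma> \<beta>) * (exp \<bar>\<delta>\<bar> - 1)\<^sup>2) - 1"
proof -
  define g where "g i j = p1_mu \<gamma> \<alpha> i * p1_mu \<gamma> \<beta> j" for i j
  define K where "K = (exp \<bar>\<delta>\<bar> - 1)\<^sup>2"
  have "chi_square (adj_set n) (p1_pmf n \<rho> \<gamma> \<alpha> \<beta>) (p1_pmf n (\<rho> + 2 * \<delta>) (\<gamma> - \<delta>) \<alpha> \<beta>)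
      \<le> exp (\<Sum>(i, j)\<in>dyads n. K * (g i j + g j i)) - 1"
    by (rule chi_square_p1_le)
      (use p1_dyad_sum_sq_ratio_shift_gamma_le in \<open>simp add: K_def g_def algebra_simps\<close>)
  also have "\<dots> \<le> exp (K * (\<Sum>i<n. \<Sum>j<n. g i j)) - 1"
  proof -
    have "(\<Sum>(i, j)\<in>dyads n. g i j + g j i) \<le> (\<Sum>i<n. \<Sum>j<n. g i j)"
      by (rule sum_dyads_sym_le) (simp add: g_def p1_mu_pos less_imp_le)
    then have "K * (\<Sum>(i, j)\<in>dyads n. g i j + g j i) \<le> K * (\<Sum>i<n. \<Sum>j<n. g i j)"
      by (rule mult_left_mono) (simp add: K_def)
    then show ?thesis
      by (simp add: sum_distrib_left case_prod_beta')
  qed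
  finally show ?thesis
    by (simp add: K_def g_def l1_eq_sum p1_mu_pos sum_product mult_ac)
qed

section \<open>Asymptotics\<close>

lemma sq_exp_abs_minus_one_le:
  fixes d :: real
  assumes "\<bar>d\<bar> \<le> 1 / 2"
  shows "(exp \<bar>d\<bar> - 1)\<^sup>2 \<le> 4 * d\<^sup>2"
proof -
  have "exp \<bar>d\<bar> \<le> 1 + 2 * \<bar>d\<bar>"
    using exp_bound_lemma[of "\<bar>d\<bar>"] assms by simp
  then have "(exp \<bar>d\<bar> - 1)\<^sup>2 \<le> (2 * \<bar>d\<bar>)\<^sup>2"
    by (intro power_mono) simp_all
  then show ?thesis by (simp add: power_mult_distrib)
qed

lemma tendsto_exp_mult_sq_exp_abs_minus_one:
  fixes X \<delta> :: "'a \<Rightarrow> real"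
  assumes X_ge: "\<forall>\<^sub>F n in F. 1 \<le> X n" and lim: "((\<lambda>n. X n * (\<delta> n)\<^sup>2) \<longlongrightarrow> 0) F"
  shows "((\<lambda>n. exp (X n * (exp \<bar>\<delta> n\<bar> - 1)\<^sup>2) - 1) \<longlongrightarrow> 0) F"
proof -
  have "((\<lambda>n. (\<delta> n)\<^sup>2) \<longlongrightarrow> 0) F"
    by (rule tendsto_sandwich[OF _ _ tendsto_const lim])
      (use X_ge in \<open>auto elim: eventually_mono simp: mult_le_cancel_right1\<close>)
  then have "((\<lambda>n. \<bar>\<delta> n\<bar>) \<longlongrightarrow> 0) F"
    using tendsto_real_sqrt by fastforce
  then have "\<forall>\<^sub>F n in F. \<bar>\<delta> n\<bar> < 1 / 2"
    by (rule order_tendstoD) simp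
  then have small: "\<forall>\<^sub>F n in F. \<bar>\<delta> n\<bar> \<le> 1 / 2"
    by (rule eventually_mono) simp
  have "((\<lambda>n. X n * (exp \<bar>\<delta> n\<bar> - 1)\<^sup>2) \<longlongrightarrow> 0) F"
  proof (rule tendsto_sandwich[OF _ _ tendsto_const])
    show "\<forall>\<^sub>F n in F. 0 \<le> X n * (exp \<bar>\<delta> n\<bar> - 1)\<^sup>2"
      using X_ge by eventually_elim simp
    show "\<forall>\<^sub>F n in F. X n * (exp \<bar>\<delta> n\<bar> - 1)\<^sup>2 \<le> 4 * (X n * (\<delta> n)\<^sup>2)"
      using X_ge small
      by eventually_elim (use sq_exp_abs_minus_one_le in \<open>simp add: mult_left_mono mult.left_commute\<close>)
    show "((\<lambda>n. 4 * (X n * (\<delta> n)\<^sup>2)) \<longlongrightarrow> 0) F"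
      using tendsto_mult_right_zero[OF lim, of 4] by simp
  qed
  then show ?thesis
    using tendsto_diff[OF tendsto_exp tendsto_const, of _ 0 F 1] by simp
qed

lemma chi_square_p1_shift_rho_tendsto_zero:
  fixes \<rho> \<gamma> \<delta> :: "nat \<Rightarrow> real" and \<alpha> \<beta> :: "nat \<Rightarrow> nat \<Rightarrow> real"
  defines "\<eta> \<equiv> \<lambda>n. l1 n (p1_eta (\<gamma> n) (\<alpha> n) (\<beta> n))"
  assumes "filterlim (\<lambda>n. exp (\<rho> n / 2) * \<eta> n) at_top sequentially"
    and lim: "(\<lambda>n. exp (\<rho> n) * (\<eta> n)\<^sup>2 * (\<delta> n)\<^sup>2) \<longlonglongrightarrow> 0"
  shows "(\<lambda>n. chi_square (adj_set n) (p1_pmf n (\<rho> n) (\<gamma> n) (\<alpha> n) (\<beta> n))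
      (p1_pmf n (\<rho> n + \<delta> n) (\<gamma> n) (\<alpha> n) (\<beta> n))) \<longlonglongrightarrow> 0"
proof -
  have "\<forall>\<^sub>F n in sequentially. 1 \<le> exp (\<rho> n / 2) * \<eta> n"
    using assms(2) unfolding filterlim_at_top by blast
  moreover have "exp (\<rho> n) * (\<eta> n)\<^sup>2 = (exp (\<rho> n / 2) * \<eta> n)\<^sup>2" for n
    by (simp add: power_mult_distrib flip: exp_double)
  ultimately have "\<forall>\<^sub>F n in sequentially. 1 \<le> exp (\<rho> n) * (\<eta> n)\<^sup>2"
    by (simp add: one_le_power eventually_mono)
  then have "(\<lambda>n. exp (exp (\<rho> n) * (\<eta> n)\<^sup>2 * (exp \<bar>\<delta> n\<bar> - 1)\<^sup>2) - 1) \<longlonglongrightarrow> 0"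
    using lim by (rule tendsto_exp_mult_sq_exp_abs_minus_one)
  then show ?thesis
    by (rule tendsto_sandwich[OF _ _ tendsto_const, rotated 2])
      (simp_all add: \<eta>_def chi_square_nonneg p1_pmf_nonneg chi_square_p1_shift_rho_le)
qed

lemma chi_square_p1_shift_gamma_tendsto_zero:
  fixes \<rho> \<gamma> \<delta> :: "nat \<Rightarrow> real" and \<alpha> \<beta> :: "nat \<Rightarrow> nat \<Rightarrow> real"
  assumes "filterlim (\<lambda>n. l1 n (p1_eta (\<gamma> n) (\<alpha> n) (\<beta> n))) at_top sequentially"
    and lim: "(\<lambda>n. l1 n (p1_mu (\<gamma> n) (\<alpha> n)) * l1 n (p1_mu (\<gamma> n) (\<beta> n)) * (\<delta> n)\<^sup>2) \<longlonglongrightarrow> 0"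
  shows "(\<lambda>n. chi_square (adj_set n) (p1_pmf n (\<rho> n) (\<gamma> n) (\<alpha> n) (\<beta> n))
      (p1_pmf n (\<rho> n + 2 * \<delta> n) (\<gamma> n - \<delta> n) (\<alpha> n) (\<beta> n))) \<longlonglongrightarrow> 0"
proof -
  have "\<forall>\<^sub>F n in sequentially. 1 \<le> l1 n (p1_eta (\<gamma> n) (\<alpha> n) (\<beta> n))"
    using assms(1) unfolding filterlim_at_top by blast
  then have "\<forall>\<^sub>F n in sequentially. 1 \<le> l1 n (p1_mu (\<gamma> n) (\<alpha> n)) * l1 n (p1_mu (\<gamma> n) (\<beta> n))"
    by (rule eventually_mono) (use l1_p1_eta_le in \<open>smt (verit)\<close>)
  then have "(\<lambda>n. exp (l1 n (p1_mu (\<gamma> n) (\<alpha> n)) * l1 n (p1_mu (\<gamma> n) (\<beta> n))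
      * (exp \<bar>\<delta> n\<bar> - 1)\<^sup>2) - 1) \<longlonglongrightarrow> 0"
    using lim by (rule tendsto_exp_mult_sq_exp_abs_minus_one)
  then show ?thesis
    by (rule tendsto_sandwich[OF _ _ tendsto_const, rotated 2])
      (simp_all add: chi_square_nonneg p1_pmf_nonneg chi_square_p1_shift_gamma_le)
qed

theorem theorem3:
  fixes \<rho> \<gamma> \<delta>\<^sub>1 \<delta>\<^sub>2 :: "nat \<Rightarrow> real"
    and \<alpha> \<beta> :: "nat \<Rightarrow> nat \<Rightarrow> real"
  assumes sum_\<alpha>: "\<And>n. (\<Sum>i<n. \<alpha> n i) = 0"
    and sum_\<beta>: "\<And>n. (\<Sum>i<n. \<beta> n i) = 0"
    and G1_mu: "(\<lambda>n. vmax n (p1_mu (\<gamma> n) (\<alpha> n))) \<longlonglongrightarrow> 0"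
    and G1_nu: "(\<lambda>n. vmax n (p1_mu (\<gamma> n) (\<beta> n))) \<longlonglongrightarrow> 0"
    and G1_eta: "(\<lambda>n. exp (\<rho> n / 2) * vmax n (p1_eta (\<gamma> n) (\<alpha> n) (\<beta> n))) \<longlonglongrightarrow> 0"
    and G2_a: "filterlim (\<lambda>n. exp (\<rho> n / 2) * l1 n (p1_eta (\<gamma> n) (\<alpha> n) (\<beta> n))) at_top sequentially"
    and G2_b: "filterlim (\<lambda>n. l1 n (p1_eta (\<gamma> n) (\<alpha> n) (\<beta> n))) at_top sequentially"
  shows
    "((\<lambda>n. exp (\<rho> n) / exp (rho_tilde n (\<gamma> n) (\<alpha> n) (\<beta> n))) \<longlonglongrightarrow> 0
       \<and> (\<lambda>n. exp (\<rho> n) * (l1 n (p1_eta (\<gamma> n) (\<alpha> n) (\<beta> n)))^2 * (\<delta>\<^sub>1 n)^2) \<longlonglongrightarrow> 0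
      \<longrightarrow> (\<lambda>n. chi_square (adj_set n)
              (p1_pmf n (\<rho> n) (\<gamma> n) (\<alpha> n) (\<beta> n))
              (p1_pmf n (\<rho> n + \<delta>\<^sub>1 n) (\<gamma> n) (\<alpha> n) (\<beta> n))) \<longlonglongrightarrow> 0)
     \<and>
     ((\<exists>C>0. \<forall>\<^sub>F n in sequentially.
          exp (\<rho> n) \<ge> C * exp (rho_tilde n (\<gamma> n) (\<alpha> n) (\<beta> n)))
       \<and> (\<lambda>n. l1 n (p1_mu (\<gamma> n) (\<alpha> n)) * l1 n (p1_mu (\<gamma> n) (\<beta> n)) * (\<delta>\<^sub>2 n)^2) \<longlonglongrightarrow> 0
      \<longrightarrow> (\<lambda>n. chi_square (adj_set n)
              (p1_pmf n (\<rho> n) (\<gamma> n) (\<alpha> n) (\<beta> n))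
              (p1_pmf n (\<rho> n + 2 * \<delta>\<^sub>2 n) (\<gamma> n - \<delta>\<^sub>2 n) (\<alpha> n) (\<beta> n))) \<longlonglongrightarrow> 0)"
  using chi_square_p1_shift_rho_tendsto_zero[OF G2_a] chi_square_p1_shift_gamma_tendsto_zero[OF G2_b]
  by blast

end
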